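(* Let $a,b$ be distinct positive real numbers and write $G=G(a,b)$, $L=L(a,b)$, $I=I(a,b)$. Then $$\frac{G\cdot I}{L}<\sqrt{I\cdot G}<L(I,G)<L,$$ $$\big(L(I,G)\big)^2<L\cdot L(I,G)<L(I^2,G^2)<L\cdot\frac{I+G}{2}.$$
   Context: For positive reals $x\neq y$: $G(x,y)=\sqrt{xy}$, logarithmic mean $L(x,y)=\frac{x-y}{\log x-\log y}$, identric mean $I(x,y)=\frac{1}{e}\left(\frac{x^x}{y^y}\right)^{1/(x-y)}$. *)

theory Defs
  imports Complex_Main
begin

definition geo_mean :: "real \<Rightarrow> real \<Rightarrow> real" where
  "geo_mean x y = sqrt (x * y)"

definition log_mean :: "real \<Rightarrow> real \<Rightarrow> real" where
  "log_mean x y = (x - y) / (ln x - ln y)"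

definition identric_mean :: "real \<Rightarrow> real \<Rightarrow> real" where
  "identric_mean x y = (1 / exp 1) * ((x powr x) / (y powr y)) powr (1 / (x - y))"

end

theory Submission
  imports Defs "HOL-Real_Asymp.Real_Asymp"
begin

(*
  Write a = g e^t, b = g e^-t with g, t > 0. Then G = g, L = g sinh t / t and
  I = g exp (t coth t - 1). Together with G < L for any pair and the identity
  L(x^2, y^2) = L(x, y) (x + y) / 2, the whole chain reduces to
  I G < L^2,  L(I, G) < L  and  L < (I + G) / 2.
  Each of these is an inequality in the single variable t whose two sides agree
  in the limit t -> 0+; the derivative of their difference has as numerator a
  combination of hyperbolic functions and powers of t whose Taylor series has
  nonnegative coefficients.
*)

definition egf_sums :: "(nat \<Rightarrow> real) \<Rightarrow> real \<Rightarrow> real \<Rightarrow> bool" where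
  "egf_sums c t S \<longleftrightarrow> (\<lambda>n. c n * t ^ n / fact n) sums S"

lemma egf_sums_sinh: "egf_sums (\<lambda>n. if even n then 0 else k ^ n) t (sinh (k * t))"
proof -
  have "(\<lambda>n. if even n then 0 else (k * t) ^ n /\<^sub>R fact n) sums sinh (k * t)"
    by (rule sinh_converges)
  moreover have "(\<lambda>n. if even n then 0 else (k * t) ^ n /\<^sub>R fact n)
      = (\<lambda>n. (if even n then 0 else k ^ n) * t ^ n / fact n)"
    by (auto simp: power_mult_distrib divide_inverse)
  ultimately show ?thesis
    unfolding egf_sums_def by simp
qed

lemma egf_sums_cosh: "egf_sums (\<lambda>n. if even n then k ^ n else 0) t (cosh (k * t))"
proof -
  have "(\<lambda>n. if even n then (k * t) ^ n /\<^sub>R fact n else 0) sums cosh (k * t)"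
    by (rule cosh_converges)
  moreover have "(\<lambda>n. if even n then (k * t) ^ n /\<^sub>R fact n else 0)
      = (\<lambda>n. (if even n then k ^ n else 0) * t ^ n / fact n)"
    by (auto simp: power_mult_distrib divide_inverse)
  ultimately show ?thesis
    unfolding egf_sums_def by simp
qed

lemma egf_sums_const: "egf_sums (\<lambda>n. if n = 0 then c else 0) t c"
proof -
  have "(\<lambda>n. (if n = 0 then c else 0) * t ^ n / fact n) = (\<lambda>n. if n = 0 then c else 0)"
    by auto
  then show ?thesis
    unfolding egf_sums_def using sums_single[of 0 "\<lambda>_. c"] by simp
qed

lemma egf_sums_add:
  "egf_sums a t A \<Longrightarrow> egf_sums b t B \<Longrightarrow> egf_sums (\<lambda>n. a n + b n) t (A + B)"
  unfolding egf_sums_def by (drule (1) sums_add) (simp add: add_divide_distrib distrib_right)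

lemma egf_sums_diff:
  "egf_sums a t A \<Longrightarrow> egf_sums b t B \<Longrightarrow> egf_sums (\<lambda>n. a n - b n) t (A - B)"
  unfolding egf_sums_def by (drule (1) sums_diff) (simp add: diff_divide_distrib left_diff_distrib)

lemma egf_sums_cmult: "egf_sums a t A \<Longrightarrow> egf_sums (\<lambda>n. c * a n) t (c * A)"
  unfolding egf_sums_def by (drule sums_mult[where c = c]) (simp add: mult.assoc)

lemma egf_sums_mult_power:
  assumes "egf_sums c t S"
  shows "egf_sums (\<lambda>n. if n < j then 0 else c (n - j) * (fact n / fact (n - j))) t (t ^ j * S)"
proof -
  let ?d = "\<lambda>n. if n < j then 0 else c (n - j) * (fact n / fact (n - j))"
  have "(\<lambda>n. t ^ j * (c n * t ^ n / fact n)) sums (t ^ j * S)"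
    using sums_mult assms unfolding egf_sums_def by blast
  moreover have "(\<lambda>n. t ^ j * (c n * t ^ n / fact n)) = (\<lambda>n. ?d (n + j) * t ^ (n + j) / fact (n + j))"
    by (auto simp: power_add field_simps)
  ultimately have "(\<lambda>n. ?d (n + j) * t ^ (n + j) / fact (n + j)) sums (t ^ j * S)"
    by simp
  then show ?thesis
    unfolding egf_sums_def by (subst (asm) sums_zero_iff_shift) auto
qed

lemma egf_sums_mult_t:
  "egf_sums c t S \<Longrightarrow> egf_sums (\<lambda>n. if n < 1 then 0 else c (n - 1) * real n) t (t * S)"
  using egf_sums_mult_power[of c t S 1] by (simp cong: if_cong add: fact_reduce)

lemma egf_sums_mult_t2:
  "egf_sums c t S \<Longrightarrow>
    egf_sums (\<lambda>n. if n < 2 then 0 else c (n - 2) * (real n * (real n - 1))) t (t ^ 2 * S)"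
  using egf_sums_mult_power[of c t S 2]
  by (simp cong: if_cong add: fact_reduce of_nat_diff numeral_2_eq_2 mult.assoc)

lemma egf_sums_mult_t3:
  "egf_sums c t S \<Longrightarrow>
    egf_sums (\<lambda>n. if n < 3 then 0 else c (n - 3) * (real n * (real n - 1) * (real n - 2))) t (t ^ 3 * S)"
  using egf_sums_mult_power[of c t S 3]
  by (simp cong: if_cong add: fact_reduce of_nat_diff numeral_3_eq_3 mult.assoc)

lemma egf_sums_pos:
  assumes "egf_sums q t S" "0 < t" "\<And>n. 0 \<le> q n" "0 < q i"
  shows "0 < S"
proof -
  have "(\<lambda>n. q n * t ^ n / fact n) sums S"
    using assms(1) unfolding egf_sums_def .
  moreover have "0 < (\<Sum>n. q n * t ^ n / fact n)"
    using assms calculation by (intro suminf_pos2[where i = i]) (auto simp: sums_summable)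
  ultimately show ?thesis
    using sums_unique by metis
qed

lemma sinh_gt_self:
  fixes t :: real
  assumes "0 < t"
  shows "t < sinh t"
proof -
  define q where "q n = (if even n then 0 else 1 ^ n)
    - (if n < 1 then 0 else (if n - 1 = 0 then 1 else 0) * real n)" for n
  have "egf_sums q t (sinh (1 * t) - t * 1)"
    unfolding q_def by (intro egf_sums_diff egf_sums_sinh egf_sums_mult_t egf_sums_const)
  moreover have "0 \<le> q n" for n
    by (auto simp: q_def)
  moreover have "0 < q 3"
    by (simp add: q_def)
  ultimately show ?thesis
    using egf_sums_pos assms by fastforce
qed

lemma sinh_less_mult_cosh:
  fixes t :: real
  assumes "0 < t"
  shows "sinh t < t * cosh t"
proof -
  define q where "q n = (if n < 1 then 0 else (if even (n - 1) then 1 ^ (n - 1) else 0) * real n)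
    - (if even n then 0 else 1 ^ n)" for n
  have "egf_sums q t (t * cosh (1 * t) - sinh (1 * t))"
    unfolding q_def by (intro egf_sums_diff egf_sums_sinh egf_sums_mult_t egf_sums_cosh)
  moreover have "0 \<le> q n" for n
    by (cases "n = 0"; cases "even n") (auto simp: q_def)
  moreover have "0 < q 3"
    by (simp add: q_def)
  ultimately show ?thesis
    using egf_sums_pos assms by fastforce
qed

lemma sinh_square_bound:
  fixes t :: real
  assumes "0 < t"
  shows "2 * sinh t ^ 2 < t * sinh t * cosh t + t ^ 2"
proof -
  define q where "q n = 1/2 * (if n < 1 then 0 else (if even (n - 1) then 0 else 2 ^ (n - 1)) * real n)
    - (if even n then 2 ^ n else 0) + (if n = 0 then 1 else 0)
    + (if n < 2 then 0 else (if n - 2 = 0 then 1 else 0) * (real n * (real n - 1)))" for n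
  have "egf_sums q t (1/2 * (t * sinh (2 * t)) - cosh (2 * t) + 1 + t ^ 2 * 1)"
    unfolding q_def
    by (intro egf_sums_add egf_sums_diff egf_sums_cmult egf_sums_cosh egf_sums_const
        egf_sums_mult_t[OF egf_sums_sinh] egf_sums_mult_t2[OF egf_sums_const])
  moreover have "0 \<le> q n" for n
  proof (cases "n < 4")
    case True
    then have "n = 0 \<or> n = 1 \<or> n = 2 \<or> n = 3"
      by arith
    then show ?thesis
      by (auto simp: q_def)
  next
    case False
    then have "(2::real) ^ n = 2 * 2 ^ (n - 1)"
      by (simp add: power_eq_if)
    with False show ?thesis
      by (cases "even n") (auto simp: q_def)
  qed
  moreover have "0 < q 6"
    by (simp add: q_def)
  ultimately have "0 < 1/2 * (t * sinh (2 * t)) - cosh (2 * t) + 1 + t ^ 2 * 1"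
    using egf_sums_pos assms by blast
  then show ?thesis
    by (simp add: sinh_double cosh_double cosh_square_eq)
qed

lemma three_power_ge:
  assumes "9 \<le> n"
  shows "3 + 8 * real n * (real n - 1) + real n * (real n - 1) * 2 ^ (n - 1) \<le> 3 ^ n"
  using assms
proof (induction n rule: nat_induct_at_least)
  case base
  then show ?case by simp
next
  case (Suc n)
  define N where "N = real n"
  define P where "P = (2::real) ^ (n - 1)"
  have N: "9 \<le> N" and P: "0 \<le> P"
    using Suc by (simp_all add: N_def P_def)
  have "(2::real) ^ (Suc n - 1) = 2 * P"
    using Suc by (simp add: P_def power_eq_if)
  then have "3 + 8 * real (Suc n) * (real (Suc n) - 1)
        + real (Suc n) * (real (Suc n) - 1) * 2 ^ (Suc n - 1)
      = 3 + 8 * (N + 1) * N + (N + 1) * N * (2 * P)"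
    by (simp add: N_def algebra_simps)
  also have "\<dots> \<le> 3 * (3 + 8 * N * (N - 1) + N * (N - 1) * P)"
  proof -
    have "32 * N \<le> 16 * (N * N)" and "0 \<le> N * (N - 5) * P"
      using N P by (simp_all add: mult_right_mono)
    moreover have "3 * (3 + 8 * N * (N - 1) + N * (N - 1) * P)
          - (3 + 8 * (N + 1) * N + (N + 1) * N * (2 * P))
        = 6 + 16 * (N * N) - 32 * N + N * (N - 5) * P"
      by (simp add: algebra_simps)
    ultimately show ?thesis
      by linarith
  qed
  also have "\<dots> \<le> 3 * 3 ^ n"
    using Suc.IH by (simp add: N_def P_def)
  finally show ?case
    by simp
qed

lemma sinh_triple: "sinh (3 * t) = 3 * sinh t + 4 * sinh t ^ 3" for t :: real
proof -
  have "sinh (3 * t) = sinh (2 * t + t)"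
    by simp
  also have "\<dots> = 3 * sinh t + 4 * sinh t ^ 3"
    using cosh_square_eq[of t] unfolding sinh_add sinh_double cosh_double by algebra
  finally show ?thesis .
qed

(* n! times the n-th Taylor coefficient of 2 sinh^3 t + t^3 - t^2 sinh t (cosh t + 2),
   using 4 sinh^3 t = sinh 3t - 3 sinh t and 2 sinh t cosh t = sinh 2t. *)
definition sinh_cube_bound_coeff :: "nat \<Rightarrow> real" where
  "sinh_cube_bound_coeff n = 1/2 * ((if even n then 0 else 3 ^ n) - 3 * (if even n then 0 else 1 ^ n))
    - 1/2 * (if n < 2 then 0 else (if even (n - 2) then 0 else 2 ^ (n - 2)) * (real n * (real n - 1)))
    - 2 * (if n < 2 then 0 else (if even (n - 2) then 0 else 1 ^ (n - 2)) * (real n * (real n - 1)))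
    + (if n < 3 then 0 else (if n - 3 = 0 then 1 else 0) * (real n * (real n - 1) * (real n - 2)))"

lemma sinh_cube_bound_coeff_nonneg: "0 \<le> sinh_cube_bound_coeff n"
proof (cases "n < 9")
  case True
  then have "n = 0 \<or> n = 1 \<or> n = 2 \<or> n = 3 \<or> n = 4 \<or> n = 5 \<or> n = 6 \<or> n = 7 \<or> n = 8"
    by arith
  then show ?thesis
    by (auto simp: sinh_cube_bound_coeff_def)
next
  case False
  show ?thesis
  proof (cases "even n")
    case True
    with False show ?thesis
      by (simp add: sinh_cube_bound_coeff_def)
  next
    case odd: False
    define X Y where "X = real n * (real n - 1)" and "Y = 2 ^ (n - 2) * (real n * (real n - 1))"
    have "n - 1 = Suc (n - 2)"
      using False by arith
    then have bound: "3 + 8 * X + 2 * Y \<le> 3 ^ n"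
      using three_power_ge[of n] False by (simp add: X_def Y_def algebra_simps)
    have nonneg: "0 \<le> X" "0 \<le> Y"
      using False by (simp_all add: X_def Y_def)
    have "sinh_cube_bound_coeff n = (3 ^ n - 3) / 2 - Y / 2 - 2 * X"
      using False odd by (simp add: sinh_cube_bound_coeff_def X_def Y_def field_simps)
    with bound nonneg show ?thesis
      by (simp add: field_simps)
  qed
qed

lemma sinh_cube_bound:
  fixes t :: real
  assumes "0 < t"
  shows "t ^ 2 * sinh t * (cosh t + 2) < 2 * sinh t ^ 3 + t ^ 3"
proof -
  have "egf_sums sinh_cube_bound_coeff t
      (1/2 * (sinh (3 * t) - 3 * sinh (1 * t)) - 1/2 * (t ^ 2 * sinh (2 * t))
        - 2 * (t ^ 2 * sinh (1 * t)) + t ^ 3 * 1)"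
    unfolding sinh_cube_bound_coeff_def
    by (intro egf_sums_add egf_sums_diff egf_sums_cmult egf_sums_sinh
        egf_sums_mult_t2[OF egf_sums_sinh] egf_sums_mult_t3[OF egf_sums_const])
  moreover note sinh_cube_bound_coeff_nonneg
  moreover have "0 < sinh_cube_bound_coeff 7"
    by (simp add: sinh_cube_bound_coeff_def)
  ultimately have "0 < 1/2 * (sinh (3 * t) - 3 * sinh (1 * t)) - 1/2 * (t ^ 2 * sinh (2 * t))
      - 2 * (t ^ 2 * sinh (1 * t)) + t ^ 3 * 1"
    using egf_sums_pos assms by blast
  then show ?thesis
    by (simp only: sinh_triple sinh_double mult_1_left) (simp add: algebra_simps)
qed

(* Likewise for sinh^3 t + t^3 (cosh t + 1) - t^2 sinh t (cosh t + 2). *)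
definition sinh_cube_cosh_bound_coeff :: "nat \<Rightarrow> real" where
  "sinh_cube_cosh_bound_coeff n = 1/4 * ((if even n then 0 else 3 ^ n) - 3 * (if even n then 0 else 1 ^ n))
    - 2 * (if n < 2 then 0 else (if even (n - 2) then 0 else 1 ^ (n - 2)) * (real n * (real n - 1)))
    + (if n < 3 then 0 else (if even (n - 3) then 1 ^ (n - 3) else 0) * (real n * (real n - 1) * (real n - 2)))
    - 1/2 * (if n < 2 then 0 else (if even (n - 2) then 0 else 2 ^ (n - 2)) * (real n * (real n - 1)))
    + (if n < 3 then 0 else (if n - 3 = 0 then 1 else 0) * (real n * (real n - 1) * (real n - 2)))"

lemma sinh_cube_cosh_bound_coeff_nonneg: "0 \<le> sinh_cube_cosh_bound_coeff n"
proof (cases "n < 9")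
  case True
  then have "n = 0 \<or> n = 1 \<or> n = 2 \<or> n = 3 \<or> n = 4 \<or> n = 5 \<or> n = 6 \<or> n = 7 \<or> n = 8"
    by arith
  then show ?thesis
    by (auto simp: sinh_cube_cosh_bound_coeff_def)
next
  case False
  show ?thesis
  proof (cases "even n")
    case True
    with False show ?thesis
      by (simp add: sinh_cube_cosh_bound_coeff_def)
  next
    case odd: False
    define X Y where "X = real n * (real n - 1)" and "Y = 2 ^ (n - 2) * (real n * (real n - 1))"
    have "n - 1 = Suc (n - 2)"
      using False by arith
    then have bound: "3 + 8 * X + 2 * Y \<le> 3 ^ n"
      using three_power_ge[of n] False by (simp add: X_def Y_def algebra_simps)
    have nonneg: "0 \<le> X" "0 \<le> Y" "0 \<le> X * (real n - 2)"
      using False by (simp_all add: X_def Y_def)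
    have "sinh_cube_cosh_bound_coeff n = (3 ^ n - 3) / 4 - 2 * X + X * (real n - 2) - Y / 2"
      using False odd by (simp add: sinh_cube_cosh_bound_coeff_def X_def Y_def field_simps)
    with bound nonneg show ?thesis
      by (simp add: field_simps)
  qed
qed

lemma sinh_cube_cosh_bound:
  fixes t :: real
  assumes "0 < t"
  shows "t ^ 2 * sinh t * (cosh t + 2) < sinh t ^ 3 + t ^ 3 * (cosh t + 1)"
proof -
  have "egf_sums sinh_cube_cosh_bound_coeff t
      (1/4 * (sinh (3 * t) - 3 * sinh (1 * t)) - 2 * (t ^ 2 * sinh (1 * t))
        + t ^ 3 * cosh (1 * t) - 1/2 * (t ^ 2 * sinh (2 * t)) + t ^ 3 * 1)"
    unfolding sinh_cube_cosh_bound_coeff_def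
    by (intro egf_sums_add egf_sums_diff egf_sums_cmult egf_sums_sinh egf_sums_mult_t2[OF egf_sums_sinh]
        egf_sums_mult_t3[OF egf_sums_cosh] egf_sums_mult_t3[OF egf_sums_const])
  moreover note sinh_cube_cosh_bound_coeff_nonneg
  moreover have "0 < sinh_cube_cosh_bound_coeff 9"
    by (simp add: sinh_cube_cosh_bound_coeff_def)
  ultimately have "0 < 1/4 * (sinh (3 * t) - 3 * sinh (1 * t)) - 2 * (t ^ 2 * sinh (1 * t))
      + t ^ 3 * cosh (1 * t) - 1/2 * (t ^ 2 * sinh (2 * t)) + t ^ 3 * 1"
    using egf_sums_pos assms by blast
  then show ?thesis
    by (simp only: sinh_triple sinh_double mult_1_left) (simp add: algebra_simps)
qed

lemma pos_if_deriv_pos_tendsto_0: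
  fixes f f' :: "real \<Rightarrow> real"
  assumes deriv: "\<And>x. 0 < x \<Longrightarrow> (f has_real_derivative f' x) (at x)"
    and pos: "\<And>x. 0 < x \<Longrightarrow> 0 < f' x"
    and lim: "(f \<longlongrightarrow> 0) (at_right 0)"
    and "0 < t"
  shows "0 < f t"
proof -
  have mono: "f a < f b" if "0 < a" "a < b" for a b
  proof (rule DERIV_pos_imp_increasing_open[OF \<open>a < b\<close>])
    show "\<exists>y. (f has_real_derivative y) (at x) \<and> 0 < y" if "a < x" "x < b" for x
      using deriv pos that \<open>0 < a\<close> by (meson less_trans)
    show "continuous_on {a..b} f"
    proof (intro continuous_at_imp_continuous_on ballI)
      fix x
      assume "x \<in> {a..b}"
      then show "isCont f x"
        using deriv[THEN DERIV_isCont] \<open>0 < a\<close> by auto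
    qed
  qed
  have "0 \<le> f (t / 2)"
  proof (rule tendsto_le[OF _ tendsto_const lim])
    show "\<forall>\<^sub>F x in at_right 0. f x \<le> f (t / 2)"
      unfolding eventually_at_right_field using \<open>0 < t\<close>
      by (intro exI[of _ "t / 2"]) (auto intro!: less_imp_le mono)
  qed simp
  also have "f (t / 2) < f t"
    using \<open>0 < t\<close> by (intro mono) auto
  finally show ?thesis .
qed

lemma coth_ineq_ln_sinh_ratio:
  fixes t :: real
  assumes "0 < t"
  shows "t * cosh t / sinh t - 1 < 2 * ln (sinh t / t)"
proof -
  have "0 < 2 * ln (sinh t / t) - t * cosh t / sinh t + 1"
  proof (rule pos_if_deriv_pos_tendsto_0[OF _ _ _ assms])
    fix x :: real
    assume x: "0 < x"
    show "((\<lambda>t::real. 2 * ln (sinh t / t) - t * cosh t / sinh t + 1) has_real_derivative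
        (x * sinh x * cosh x - 2 * sinh x ^ 2 + x ^ 2) / (x * sinh x ^ 2)) (at x)"
      using x
      apply -
      apply (rule derivative_eq_intros refl | simp)+
      using x apply (simp add: field_simps)
      using cosh_square_eq[of x] unfolding power2_eq_square by algebra
    show "0 < (x * sinh x * cosh x - 2 * sinh x ^ 2 + x ^ 2) / (x * sinh x ^ 2)"
      using sinh_square_bound[OF x] x by (intro divide_pos_pos) auto
  next
    show "((\<lambda>t::real. 2 * ln (sinh t / t) - t * cosh t / sinh t + 1) \<longlongrightarrow> 0) (at_right 0)"
      by real_asymp
  qed
  then show ?thesis
    by simp
qed

lemma ln_sinh_ratio_ineq_coth:
  fixes t :: real
  assumes "0 < t"
  shows "ln (2 * sinh t / t - 1) < t * cosh t / sinh t - 1"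
proof -
  have "0 < t * cosh t / sinh t - 1 - ln (2 * sinh t / t - 1)"
  proof (rule pos_if_deriv_pos_tendsto_0[OF _ _ _ assms])
    fix x :: real
    assume x: "0 < x"
    have "0 < sinh x - x"
      using sinh_gt_self[OF x] by simp
    then show "((\<lambda>t. t * cosh t / sinh t - 1 - ln (2 * sinh t / t - 1)) has_real_derivative
        (2 * sinh x ^ 3 - x ^ 2 * sinh x * cosh x - 2 * x ^ 2 * sinh x + x ^ 3)
          / (x * sinh x ^ 2 * (2 * sinh x - x))) (at x)"
      using x
      apply -
      apply (rule derivative_eq_intros refl | simp)+
      using x apply (simp add: field_simps)
      using cosh_square_eq[of x] unfolding power2_eq_square by algebra
    show "0 < (2 * sinh x ^ 3 - x ^ 2 * sinh x * cosh x - 2 * x ^ 2 * sinh x + x ^ 3)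
        / (x * sinh x ^ 2 * (2 * sinh x - x))"
      using sinh_cube_bound[OF x] sinh_gt_self[OF x] x
      by (intro divide_pos_pos) (auto simp: algebra_simps)
  next
    show "((\<lambda>t::real. t * cosh t / sinh t - 1 - ln (2 * sinh t / t - 1)) \<longlongrightarrow> 0) (at_right 0)"
      by real_asymp
  qed
  then show ?thesis
    by simp
qed

lemma coth_ineq_ln_cosh_sinh_ratio:
  fixes t :: real
  assumes "0 < t"
  shows "t * cosh t / sinh t - 1 < ln (cosh t + 1 - sinh t / t)"
proof -
  have "0 < ln (cosh t + 1 - sinh t / t) - t * cosh t / sinh t + 1"
  proof (rule pos_if_deriv_pos_tendsto_0[OF _ _ _ assms])
    fix x :: real
    assume x: "0 < x"
    define D where "D = x * cosh x + x - sinh x"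
    have D: "0 < D"
      using sinh_less_mult_cosh[OF x] x by (simp add: D_def)
    have "cosh x + 1 - sinh x / x = D / x"
      using x by (simp add: D_def field_simps)
    with D x show "((\<lambda>t. ln (cosh t + 1 - sinh t / t) - t * cosh t / sinh t + 1) has_real_derivative
        (sinh x ^ 3 - 2 * x ^ 2 * sinh x + x ^ 3 * cosh x - x ^ 2 * sinh x * cosh x + x ^ 3)
          / (x * sinh x ^ 2 * D)) (at x)"
      apply -
      apply (rule derivative_eq_intros refl | simp)+
      using x D apply (simp add: field_simps)
      using cosh_square_eq[of x] D_def unfolding power2_eq_square by algebra
    show "0 < (sinh x ^ 3 - 2 * x ^ 2 * sinh x + x ^ 3 * cosh x - x ^ 2 * sinh x * cosh x + x ^ 3)
        / (x * sinh x ^ 2 * D)"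
      using sinh_cube_cosh_bound[OF x] D x by (intro divide_pos_pos) (auto simp: algebra_simps)
  next
    show "((\<lambda>t::real. ln (cosh t + 1 - sinh t / t) - t * cosh t / sinh t + 1) \<longlongrightarrow> 0) (at_right 0)"
      by real_asymp
  qed
  then show ?thesis
    by simp
qed

lemma geo_mean_commute: "geo_mean x y = geo_mean y x"
  by (simp add: geo_mean_def mult.commute)

lemma log_mean_commute: "log_mean x y = log_mean y x"
  unfolding log_mean_def by (metis minus_diff_eq minus_divide_divide)

lemma identric_mean_eq_exp:
  fixes x y :: real
  assumes "0 < x" "0 < y"
  shows "identric_mean x y = exp ((x * ln x - y * ln y) / (x - y) - 1)"
proof -
  have "x powr x / y powr y = exp (x * ln x - y * ln y)"
    using assms by (simp add: powr_def exp_diff)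
  then have "(x powr x / y powr y) powr (1 / (x - y)) = exp ((x * ln x - y * ln y) / (x - y))"
    by (simp add: powr_def)
  then show ?thesis
    unfolding identric_mean_def exp_diff by simp
qed

lemma identric_mean_commute:
  fixes x y :: real
  assumes "0 < x" "0 < y"
  shows "identric_mean x y = identric_mean y x"
proof -
  have "(x * ln x - y * ln y) / (x - y) = (y * ln y - x * ln x) / (y - x)"
    using minus_divide_divide[of "y * ln y - x * ln x" "y - x"] by simp
  then show ?thesis
    using assms by (simp add: identric_mean_eq_exp)
qed

lemma geo_mean_exp_pair:
  fixes g t :: real
  assumes "0 < g"
  shows "geo_mean (g * exp t) (g * exp (-t)) = g"
  using assms by (simp add: geo_mean_def mult_ac flip: exp_add)

lemma exp_pair_diff: "g * exp t - g * exp (-t) = 2 * g * sinh (t::real)"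
  by (simp add: sinh_field_def algebra_simps)

lemma log_mean_exp_pair:
  fixes g t :: real
  assumes "0 < g" "t \<noteq> 0"
  shows "log_mean (g * exp t) (g * exp (-t)) = g * (sinh t / t)"
  using assms by (simp add: log_mean_def exp_pair_diff ln_mult)

lemma identric_mean_exp_pair:
  fixes g t :: real
  assumes "0 < g" "t \<noteq> 0"
  shows "identric_mean (g * exp t) (g * exp (-t)) = g * exp (t * cosh t / sinh t - 1)"
proof -
  let ?x = "g * exp t" and ?y = "g * exp (-t)"
  have "?x * ln ?x - ?y * ln ?y = (?x - ?y) * ln g + t * (?x + ?y)"
    using assms by (simp add: ln_mult algebra_simps)
  also have "\<dots> = 2 * g * sinh t * (ln g + t * cosh t / sinh t)"
    using assms by (simp add: exp_pair_diff cosh_field_def field_simps)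
  finally have "(?x * ln ?x - ?y * ln ?y) / (?x - ?y) - 1 = ln g + (t * cosh t / sinh t - 1)"
    using assms by (simp add: exp_pair_diff)
  then have "identric_mean ?x ?y = exp (ln g + (t * cosh t / sinh t - 1))"
    using assms by (simp add: identric_mean_eq_exp)
  then show ?thesis
    using assms by (simp add: exp_add)
qed

lemma means_exp_pair_representation:
  fixes a b :: real
  assumes "0 < a" "0 < b" "a \<noteq> b"
  obtains g t where "0 < g" "0 < t" "geo_mean a b = g" "log_mean a b = g * (sinh t / t)"
    "identric_mean a b = g * exp (t * cosh t / sinh t - 1)"
proof -
  have pair: "\<exists>g t. 0 < g \<and> 0 < t \<and> x = g * exp t \<and> y = g * exp (-t)"
    if "0 < y" "y < x" for x y :: real
  proof (intro exI conjI)
    let ?g = "sqrt (x * y)" and ?t = "(ln x - ln y) / 2"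
    show "0 < ?g" "0 < ?t"
      using that by simp_all
    have "ln ?g = (ln x + ln y) / 2"
      using that by (simp add: ln_sqrt ln_mult)
    then have "ln (?g * exp ?t) = ln x" "ln (?g * exp (-?t)) = ln y"
      using that by (simp_all add: ln_mult field_simps)
    then show "x = ?g * exp ?t" "y = ?g * exp (-?t)"
      using that by (simp_all add: ln_inj_iff)
  qed
  obtain g t where "0 < g" "0 < t"
    and "a = g * exp t \<and> b = g * exp (-t) \<or> b = g * exp t \<and> a = g * exp (-t)"
    using pair[of b a] pair[of a b] assms by (cases "b < a") auto
  then show ?thesis
    using that assms
    by (auto simp: geo_mean_exp_pair log_mean_exp_pair identric_mean_exp_pair
        geo_mean_commute[of _ "g * exp t"] log_mean_commute[of _ "g * exp t"]
        identric_mean_commute[of _ "g * exp t"])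
qed

lemma log_mean_power2:
  fixes x y :: real
  assumes "0 < x" "0 < y"
  shows "log_mean (x ^ 2) (y ^ 2) = log_mean x y * ((x + y) / 2)"
proof -
  have "ln (x ^ 2) - ln (y ^ 2) = 2 * (ln x - ln y)"
    using assms by (simp add: ln_realpow algebra_simps)
  moreover have "x ^ 2 - y ^ 2 = (x - y) * (x + y)"
    by (simp add: power2_eq_square algebra_simps)
  ultimately show ?thesis
    by (simp add: log_mean_def)
qed

lemma log_mean_mult_exp:
  fixes g r :: real
  assumes "0 < g"
  shows "log_mean (g * exp r) g = g * ((exp r - 1) / r)"
  using assms by (simp add: log_mean_def ln_mult algebra_simps)

lemma geo_mean_less_log_mean:
  fixes x y :: real
  assumes "0 < x" "0 < y" "x \<noteq> y"
  shows "geo_mean x y < log_mean x y"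
proof -
  obtain g t where "0 < g" "0 < t" "geo_mean x y = g" "log_mean x y = g * (sinh t / t)"
    using means_exp_pair_representation[OF assms] by metis
  then show ?thesis
    using sinh_gt_self[of t] by (simp add: pos_less_divide_eq)
qed

lemma geo_mean_less_identric_mean:
  fixes a b :: real
  assumes "0 < a" "0 < b" "a \<noteq> b"
  shows "geo_mean a b < identric_mean a b"
proof -
  obtain g t where "0 < g" "0 < t" "geo_mean a b = g"
    "identric_mean a b = g * exp (t * cosh t / sinh t - 1)"
    using means_exp_pair_representation[OF assms] by metis
  moreover have "0 < t * cosh t / sinh t - 1"
    using sinh_less_mult_cosh[OF \<open>0 < t\<close>] \<open>0 < t\<close> by simp
  ultimately show ?thesis
    by simp
qed

lemma identric_geo_less_log_mean_square:
  fixes a b :: real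
  assumes "0 < a" "0 < b" "a \<noteq> b"
  shows "identric_mean a b * geo_mean a b < (log_mean a b) ^ 2"
proof -
  obtain g t where "0 < g" "0 < t" and rep: "geo_mean a b = g" "log_mean a b = g * (sinh t / t)"
    "identric_mean a b = g * exp (t * cosh t / sinh t - 1)"
    using means_exp_pair_representation[OF assms] by metis
  define p r where "p = sinh t / t" and "r = t * cosh t / sinh t - 1"
  have "0 < p"
    using \<open>0 < t\<close> by (simp add: p_def)
  then have "exp r < p ^ 2"
    using coth_ineq_ln_sinh_ratio[OF \<open>0 < t\<close>]
    by (metis p_def r_def exp_less_mono exp_ln ln_realpow of_nat_numeral zero_less_power)
  then have "g * exp r * g < (g * p) ^ 2"
    using \<open>0 < g\<close> by (simp add: power2_eq_square)
  then show ?thesis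
    using rep by (simp only: p_def r_def)
qed

lemma log_mean_identric_geo_less_log_mean:
  fixes a b :: real
  assumes "0 < a" "0 < b" "a \<noteq> b"
  shows "log_mean (identric_mean a b) (geo_mean a b) < log_mean a b"
proof -
  obtain g t where "0 < g" "0 < t" and rep: "geo_mean a b = g" "log_mean a b = g * (sinh t / t)"
    "identric_mean a b = g * exp (t * cosh t / sinh t - 1)"
    using means_exp_pair_representation[OF assms] by metis
  define p r where "p = sinh t / t" and "r = t * cosh t / sinh t - 1"
  have "0 < p" "0 < r"
    using sinh_less_mult_cosh[OF \<open>0 < t\<close>] \<open>0 < t\<close> by (simp_all add: p_def r_def)
  have "cosh t + 1 - sinh t / t = 1 + r * p"
    using \<open>0 < t\<close> by (simp add: p_def r_def field_simps)
  then have "exp r < 1 + r * p"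
    using coth_ineq_ln_cosh_sinh_ratio[OF \<open>0 < t\<close>] \<open>0 < p\<close> \<open>0 < r\<close>
    by (metis r_def exp_less_mono exp_ln add_pos_pos mult_pos_pos zero_less_one)
  then have "(exp r - 1) / r < p"
    using \<open>0 < r\<close> by (simp add: pos_divide_less_eq mult.commute)
  then have "log_mean (g * exp r) g < g * p"
    using \<open>0 < g\<close> mult_strict_left_mono[of "(exp r - 1) / r" p g]
    by (simp only: log_mean_mult_exp)
  then show ?thesis
    using rep by (simp only: p_def r_def)
qed

lemma log_mean_less_mean_identric_geo:
  fixes a b :: real
  assumes "0 < a" "0 < b" "a \<noteq> b"
  shows "log_mean a b < (identric_mean a b + geo_mean a b) / 2"
proof -
  obtain g t where "0 < g" "0 < t" and rep: "geo_mean a b = g" "log_mean a b = g * (sinh t / t)"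
    "identric_mean a b = g * exp (t * cosh t / sinh t - 1)"
    using means_exp_pair_representation[OF assms] by metis
  define p r where "p = sinh t / t" and "r = t * cosh t / sinh t - 1"
  have "0 < 2 * p - 1"
    using sinh_gt_self[OF \<open>0 < t\<close>] \<open>0 < t\<close> by (simp add: p_def field_simps)
  then have "2 * p - 1 < exp r"
    using ln_sinh_ratio_ineq_coth[OF \<open>0 < t\<close>]
    by (metis p_def r_def times_divide_eq_right exp_less_mono exp_ln)
  then have "g * p < (g * exp r + g) / 2"
    using \<open>0 < g\<close> mult_strict_left_mono[of "2 * p - 1" "exp r" g]
    by (simp add: algebra_simps)
  then show ?thesis
    using rep by (simp only: p_def r_def)
qed


lemma divide_less_sqrt:
  fixes x L :: real
  assumes "0 < x" "x < L ^ 2" "0 < L"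
  shows "x / L < sqrt x"
proof -
  have "sqrt x < L"
    using assms real_less_lsqrt[of L x] by simp
  then have "sqrt x * sqrt x < sqrt x * L"
    using assms by (intro mult_strict_left_mono) auto
  then show ?thesis
    using assms by (simp add: pos_divide_less_eq)
qed

theorem corollary1:
  fixes a b :: real
  assumes "a > 0" and "b > 0" and "a \<noteq> b"
  defines "G \<equiv> geo_mean a b" and "L \<equiv> log_mean a b" and "I \<equiv> identric_mean a b"
  shows "(G * I / L < sqrt (I * G) \<and> sqrt (I * G) < log_mean I G \<and> log_mean I G < L)
    \<and> ((log_mean I G)\<^sup>2 < L * log_mean I G \<and> L * log_mean I G < log_mean (I\<^sup>2) (G\<^sup>2)
         \<and> log_mean (I\<^sup>2) (G\<^sup>2) < L * ((I + G) / 2))"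
proof -
  have "0 < G" "G < I"
    using assms geo_mean_less_identric_mean by (simp_all add: geo_mean_def)
  have IG_L: "I * G < L\<^sup>2" and M_L: "log_mean I G < L" and L_AIG: "L < (I + G) / 2"
    using identric_geo_less_log_mean_square log_mean_identric_geo_less_log_mean
      log_mean_less_mean_identric_geo assms by simp_all
  have sqrt_M: "sqrt (I * G) < log_mean I G"
    using geo_mean_less_log_mean[of I G] \<open>0 < G\<close> \<open>G < I\<close> by (simp add: geo_mean_def)
  moreover have "0 < sqrt (I * G)"
    using \<open>0 < G\<close> \<open>G < I\<close> by simp
  ultimately have "0 < log_mean I G"
    by linarith
  have "G * I / L < sqrt (I * G)"
    using divide_less_sqrt[OF _ IG_L] \<open>0 < G\<close> \<open>G < I\<close> \<open>0 < log_mean I G\<close> M_L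
    by (simp add: mult.commute)
  moreover have "log_mean (I\<^sup>2) (G\<^sup>2) = (I + G) / 2 * log_mean I G"
    using \<open>0 < G\<close> \<open>G < I\<close> by (simp add: log_mean_power2)
  moreover have "(log_mean I G)\<^sup>2 < L * log_mean I G"
    using mult_strict_right_mono[OF M_L \<open>0 < log_mean I G\<close>] by (simp add: power2_eq_square)
  moreover have "L * log_mean I G < (I + G) / 2 * log_mean I G"
    using L_AIG \<open>0 < log_mean I G\<close> by (rule mult_strict_right_mono)
  moreover have "(I + G) / 2 * log_mean I G < L * ((I + G) / 2)"
    using mult_strict_right_mono[OF M_L, of "(I + G) / 2"] \<open>0 < G\<close> \<open>G < I\<close>
    by (simp add: mult.commute)
  ultimately show ?thesis
    using sqrt_M M_L by simp
qed

end
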